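(* Let $c\ge2$, let $F$ be a standard $c$-coloring, and let $X_1\ne X_2\in\mathcal X_F$ with $F[X_1]$ monochromatic of color $c_1$ and $F[X_2]$ monochromatic of color $c_2$. Then: (i) if $X_1\cap X_2=\emptyset$, then $c_1=c_2$ and there is a matching $M\subseteq X_1\ast X_2$ such that all edges of $M$ have color $c_1$ and all edges of $(X_1\ast X_2)\setminus M$ have one common color $c_3\neq c_1$; (ii) if $X_1\cap X_2=\{v\}$, then $c_1=c_2$ and all edges of $(X_1\setminus\{v\})\ast(X_2\setminus\{v\})$ have one common color $c_3\neq c_1$; (iii) $|X_1\cap X_2|\ge2$ is impossible.
   Context: A $c$-coloring $F$ is a map from the $2$-subsets of a finite set $V(F)$ to $[c]$. $F$ is standard if it contains no induced copy of any coloring in $\hat K_{3,1}$ or $\hat K_{3,3}$, where: $\hat K_{3,1}$ is the family of $4$-vertex colorings consisting of a monochromatic triangle of color $a$ plus a vertex joined to it by either (two edges of color $a$ and one of color $b\ne a$), or (three edges of three distinct colors, one being $a$), or (two edges of color $b$ and one of color $d$, with $a,b,d$ distinct); $\hat K_{3,3}$ is the family of $6$-vertex colorings consisting of two disjoint triangles monochromatic in colors $a$ and $b$ with all nine edges between them of color $d$, $a,b,d$ distinct. $\mathcal X_F$ is the set of all inclusion-maximal vertex sets of size at least $\max(c+1,6)$ all of whose pairs have the same color. For disjoint $S_1,S_2$, $S_1\ast S_2=\{\{v_1,v_2\}: v_1\in S_1,v_2\in S_2\}$. *)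

theory Defs
  imports Main
begin

text \<open>A c-coloring on vertex set V: a function on 2-subsets with values in {1..c}.
  Values of col on non-2-subsets are irrelevant.\<close>
definition coloring :: "nat \<Rightarrow> 'a set \<Rightarrow> ('a set \<Rightarrow> nat) \<Rightarrow> bool" where
  "coloring c V col \<longleftrightarrow> finite V \<and>
     (\<forall>u\<in>V. \<forall>v\<in>V. u \<noteq> v \<longrightarrow> col {u,v} \<in> {1..c})"

definition has_K31 :: "'a set \<Rightarrow> ('a set \<Rightarrow> nat) \<Rightarrow> bool" where
  "has_K31 V col \<longleftrightarrow> (\<exists>x\<in>V. \<exists>y\<in>V. \<exists>z\<in>V. \<exists>w\<in>V. \<exists>a b d.
     distinct [x,y,z,w] \<and> col {x,y} = a \<and> col {x,z} = a \<and> col {y,z} = a \<and>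
     ((col {w,x} = a \<and> col {w,y} = a \<and> col {w,z} = b \<and> b \<noteq> a) \<or>
      (col {w,x} = a \<and> col {w,y} = b \<and> col {w,z} = d \<and> distinct [a,b,d]) \<or>
      (col {w,x} = b \<and> col {w,y} = b \<and> col {w,z} = d \<and> distinct [a,b,d])))"

definition has_K33 :: "'a set \<Rightarrow> ('a set \<Rightarrow> nat) \<Rightarrow> bool" where
  "has_K33 V col \<longleftrightarrow> (\<exists>x1\<in>V. \<exists>x2\<in>V. \<exists>x3\<in>V. \<exists>y1\<in>V. \<exists>y2\<in>V. \<exists>y3\<in>V. \<exists>a b d.
     distinct [x1,x2,x3,y1,y2,y3] \<and> distinct [a,b,d] \<and>
     col {x1,x2} = a \<and> col {x1,x3} = a \<and> col {x2,x3} = a \<and>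
     col {y1,y2} = b \<and> col {y1,y3} = b \<and> col {y2,y3} = b \<and>
     (\<forall>x\<in>{x1,x2,x3}. \<forall>y\<in>{y1,y2,y3}. col {x,y} = d))"

definition standard :: "nat \<Rightarrow> 'a set \<Rightarrow> ('a set \<Rightarrow> nat) \<Rightarrow> bool" where
  "standard c V col \<longleftrightarrow> coloring c V col \<and> \<not> has_K31 V col \<and> \<not> has_K33 V col"

definition mono_col :: "('a set \<Rightarrow> nat) \<Rightarrow> 'a set \<Rightarrow> nat \<Rightarrow> bool" where
  "mono_col col S k \<longleftrightarrow> (\<forall>u\<in>S. \<forall>v\<in>S. u \<noteq> v \<longrightarrow> col {u,v} = k)"

definition mono :: "('a set \<Rightarrow> nat) \<Rightarrow> 'a set \<Rightarrow> bool" where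
  "mono col S \<longleftrightarrow> (\<exists>k. mono_col col S k)"

definition XF :: "nat \<Rightarrow> 'a set \<Rightarrow> ('a set \<Rightarrow> nat) \<Rightarrow> 'a set set" where
  "XF c V col = {X. X \<subseteq> V \<and> card X \<ge> max (c+1) 6 \<and> mono col X \<and>
      (\<forall>Y. X \<subset> Y \<and> Y \<subseteq> V \<and> card Y \<ge> max (c+1) 6 \<and> mono col Y \<longrightarrow> False)}"

definition star :: "'a set \<Rightarrow> 'a set \<Rightarrow> 'a set set" where
  "star S1 S2 = {{v1, v2} | v1 v2. v1 \<in> S1 \<and> v2 \<in> S2}"

definition matching :: "'a set set \<Rightarrow> bool" where
  "matching M \<longleftrightarrow> (\<forall>e\<in>M. \<forall>f\<in>M. e \<noteq> f \<longrightarrow> e \<inter> f = {})"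

end

theory Submission
  imports Defs
begin

text \<open>
  Everything rests on one local fact: a vertex y outside a maximal monochromatic clique X of colour a
  sends edges of one colour b \<noteq> a to all of X except at most one vertex, and at most one edge of
  colour a. Two edges of colour a into X would force all of them to be a (otherwise a member of
  hat K(3,1) appears), contradicting maximality; with no edge of colour a, some colour repeats
  because |X| > c, and the forbidden configurations then make all colours equal.

  If |X1 \<inter> X2| \<ge> 2, a vertex of X2 - X1 has two edges of colour c1 = c2 into X1.
  If X1 \<inter> X2 = {v}, the edge to v is the exceptional one on both sides, which yields a single
  cross colour; were c1 \<noteq> c2, two vertices of X1 would send colour c1 to a common vertex of X2.
  If X1 and X2 are disjoint and c1 \<noteq> c2, three vertices on each side whose cross edges avoid all
  exceptions span a member of hat K(3,3); if c1 = c2, the exceptional edges of colour c1 form a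
  matching.
\<close>

lemma obtain_not_in_list:
  assumes "length xs < card A"
  obtains x where "x \<in> A" "x \<notin> set xs"
  using assms card_length[of xs] card_mono[of "set xs" A] by (meson List.finite_set le_trans not_le subsetI)

lemma obtain_three_outside:
  assumes "finite B" and "card B + 3 \<le> card A"
  obtains x1 x2 x3 where "x1 \<in> A - B" "x2 \<in> A - B" "x3 \<in> A - B" "distinct [x1, x2, x3]"
proof -
  have "3 \<le> card (A - B)"
    using assms diff_card_le_card_Diff[of B A] by linarith
  then obtain T where "T \<subseteq> A - B" "card T = 3"
    using obtain_subset_with_card_n by metis
  then show ?thesis
    using that unfolding card_3_iff by auto
qed

lemma has_K31I:
  assumes "x \<in> V" "y \<in> V" "z \<in> V" "w \<in> V" "distinct [x, y, z, w]"
    and "col {x,y} = a" "col {x,z} = a" "col {y,z} = a"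
    and "(col {w,x} = a \<and> col {w,y} = a \<and> col {w,z} \<noteq> a)
      \<or> (col {w,x} = a \<and> col {w,y} \<noteq> a \<and> col {w,z} \<noteq> a \<and> col {w,y} \<noteq> col {w,z})
      \<or> (col {w,x} \<noteq> a \<and> col {w,y} = col {w,x} \<and> col {w,z} \<noteq> a \<and> col {w,z} \<noteq> col {w,x})"
  shows "has_K31 V col"
proof -
  have "\<exists>b d. (col {w,x} = a \<and> col {w,y} = a \<and> col {w,z} = b \<and> b \<noteq> a)
      \<or> (col {w,x} = a \<and> col {w,y} = b \<and> col {w,z} = d \<and> distinct [a,b,d])
      \<or> (col {w,x} = b \<and> col {w,y} = b \<and> col {w,z} = d \<and> distinct [a,b,d])"
    using assms(9) by (elim disjE) (simp_all, metis, metis)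
  then show ?thesis
    unfolding has_K31_def using assms(1-8) by blast
qed

lemma has_K33I:
  assumes "{x1, x2, x3, y1, y2, y3} \<subseteq> V" "distinct [x1, x2, x3, y1, y2, y3]" "distinct [a, b, d]"
    and "mono_col col {x1, x2, x3} a" "mono_col col {y1, y2, y3} b"
    and "\<forall>x\<in>{x1, x2, x3}. \<forall>y\<in>{y1, y2, y3}. col {x,y} = d"
  shows "has_K33 V col"
proof -
  have triangles: "col {x1,x2} = a \<and> col {x1,x3} = a \<and> col {x2,x3} = a \<and>
      col {y1,y2} = b \<and> col {y1,y3} = b \<and> col {y2,y3} = b"
    using assms(2,4,5) unfolding mono_col_def by simp
  show ?thesis
    unfolding has_K33_def
    apply (rule bexI[of _ x1], rule bexI[of _ x2], rule bexI[of _ x3],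
        rule bexI[of _ y1], rule bexI[of _ y2], rule bexI[of _ y3])
    apply (rule exI[of _ a], rule exI[of _ b], rule exI[of _ d])
    using assms(1-3,6) triangles by simp_all
qed

context
  fixes V :: "'a set" and col :: "'a set \<Rightarrow> nat" and X :: "'a set" and a :: nat and y :: 'a
  assumes no_K31: "\<not> has_K31 V col" and X_mono: "mono_col col X a" and X_sub: "X \<subseteq> V"
    and y_in: "y \<in> V" and y_out: "y \<notin> X"
begin

lemma has_K31_if_edges:
  assumes "p \<in> X" "q \<in> X" "r \<in> X" "distinct [p, q, r]"
    and "(col {y,p} = a \<and> col {y,q} = a \<and> col {y,r} \<noteq> a)
      \<or> (col {y,p} = a \<and> col {y,q} \<noteq> a \<and> col {y,r} \<noteq> a \<and> col {y,q} \<noteq> col {y,r})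
      \<or> (col {y,p} \<noteq> a \<and> col {y,q} = col {y,p} \<and> col {y,r} \<noteq> a \<and> col {y,r} \<noteq> col {y,p})"
  shows "has_K31 V col"
proof (rule has_K31I)
  show "col {p,q} = a" "col {p,r} = a" "col {q,r} = a"
    using X_mono assms(1-4) unfolding mono_col_def by auto
qed (use assms X_sub y_in y_out in auto)

lemma K31_free_two_edges:
  assumes "p \<in> X" "q \<in> X" "r \<in> X" "distinct [p, q, r]" "col {y,p} = a" "col {y,q} = a"
  shows "col {y,r} = a"
  using has_K31_if_edges[OF assms(1-4)] assms(5,6) no_K31 by blast

lemma K31_free_one_edge:
  assumes "p \<in> X" "q \<in> X" "r \<in> X" "distinct [p, q, r]"
    and "col {y,p} = a" "col {y,q} \<noteq> a" "col {y,r} \<noteq> a"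
  shows "col {y,q} = col {y,r}"
  using has_K31_if_edges[OF assms(1-4)] assms(5-7) no_K31 by blast

lemma K31_free_equal_edges:
  assumes "p \<in> X" "q \<in> X" "r \<in> X" "distinct [p, q, r]"
    and "col {y,q} = col {y,p}" "col {y,p} \<noteq> a" "col {y,r} \<noteq> a"
  shows "col {y,r} = col {y,p}"
  using has_K31_if_edges[OF assms(1-4)] assms(5-7) no_K31 by blast

end

lemma mono_col_insert:
  assumes "mono_col col X a" and "\<forall>x\<in>X. col {y,x} = a"
  shows "mono_col col (insert y X) a"
  using assms unfolding mono_col_def by (auto simp: insert_commute)

lemma mono_col_subset:
  assumes "mono_col col X a" "Y \<subseteq> X"
  shows "mono_col col Y a"
  using assms unfolding mono_col_def by blast

lemma coloring_pigeonhole: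
  assumes "coloring c V col" "X \<subseteq> V" "y \<in> V" "y \<notin> X" "c < card X"
  obtains p q where "p \<in> X" "q \<in> X" "p \<noteq> q" "col {y,p} = col {y,q}"
proof -
  have "(\<lambda>x. col {y,x}) ` X \<subseteq> {1..c}"
  proof (rule image_subsetI)
    fix x assume "x \<in> X"
    then show "col {y,x} \<in> {1..c}"
      using assms(1-4) unfolding coloring_def by (metis subsetD)
  qed
  then have "\<not> inj_on (\<lambda>x. col {y,x}) X"
    using assms(5) card_inj_on_le[of _ X "{1..c}"] by fastforce
  then show ?thesis
    using that unfolding inj_on_def by blast
qed

lemma
  assumes "coloring c V col" and "X \<in> XF c V col"
  shows XF_subset: "X \<subseteq> V" and XF_finite: "finite X"
    and XF_card_ge_6: "6 \<le> card X" and XF_card_gt: "c < card X"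
  using assms unfolding XF_def coloring_def by (auto intro: finite_subset)

lemma XF_maximal:
  assumes "coloring c V col" "X \<in> XF c V col" "X \<subset> Y" "Y \<subseteq> V" "mono_col col Y a"
  shows False
proof -
  have "finite Y"
    using assms(1,4) unfolding coloring_def by (blast intro: finite_subset)
  then have "card X \<le> card Y"
    using assms(3) by (simp add: card_mono)
  then show False
    using assms(2-5) unfolding XF_def mono_def by auto
qed

lemma XF_not_subset:
  assumes "coloring c V col" "X1 \<in> XF c V col" "X2 \<in> XF c V col" "X1 \<noteq> X2" "mono_col col X2 a"
  obtains x where "x \<in> X1" "x \<notin> X2"
  using XF_maximal[OF assms(1,2) _ XF_subset[OF assms(1,3)] assms(5)] assms(4) by blast

lemma XF_outside_unique_edge:
  assumes st: "standard c V col" and X: "X \<in> XF c V col" and m: "mono_col col X a"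
    and y: "y \<in> V" "y \<notin> X"
    and p: "p \<in> X" "col {y,p} = a" and q: "q \<in> X" "col {y,q} = a"
  shows "p = q"
proof (rule ccontr)
  assume "p \<noteq> q"
  have co: "coloring c V col" and nk: "\<not> has_K31 V col"
    using st unfolding standard_def by auto
  have "\<forall>r\<in>X. col {y,r} = a"
  proof
    fix r assume "r \<in> X"
    show "col {y,r} = a"
    proof (cases "r = p \<or> r = q")
      case False
      then show ?thesis
        using K31_free_two_edges[OF nk m XF_subset[OF co X] y p(1) q(1) \<open>r \<in> X\<close>] p q \<open>p \<noteq> q\<close>
        by auto
    qed (use p q in auto)
  qed
  then show False
    using XF_maximal[OF co X _ _ mono_col_insert[OF m]] XF_subset[OF co X] y by blast
qed

lemma XF_outside_vertex:
  assumes st: "standard c V col" and X: "X \<in> XF c V col" and m: "mono_col col X a"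
    and y: "y \<in> V" "y \<notin> X"
  obtains b z where "b \<noteq> a" "\<forall>x\<in>X. x \<noteq> z \<longrightarrow> col {y,x} = b"
    "\<forall>x\<in>X. col {y,x} = a \<or> col {y,x} = b"
proof -
  have co: "coloring c V col" and nk: "\<not> has_K31 V col"
    using st unfolding standard_def by auto
  note K31_free = K31_free_one_edge[OF nk m XF_subset[OF co X] y]
    K31_free_equal_edges[OF nk m XF_subset[OF co X] y]
  note unique = XF_outside_unique_edge[OF st X m y]
  show ?thesis
  proof (cases "\<exists>x0\<in>X. col {y,x0} = a")
    case True
    then obtain x0 where x0: "x0 \<in> X" "col {y,x0} = a" by blast
    obtain x1 where x1: "x1 \<in> X" "x1 \<noteq> x0"
      using obtain_not_in_list[of "[x0]" X] XF_card_ge_6[OF co X] by auto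
    have off_x0: "col {y,x} \<noteq> a" if "x \<in> X" "x \<noteq> x0" for x
      using unique[OF x0 that(1)] that(2) by blast
    have "col {y,x} = col {y,x1}" if "x \<in> X" "x \<noteq> x0" for x
    proof (cases "x = x1")
      case False
      then show ?thesis
        using K31_free(1)[OF x0(1) x1(1) that(1) _ x0(2) off_x0[OF x1(1)] off_x0[OF that]] x1(2) that(2)
        by simp
    qed simp
    then show ?thesis
      using that[of "col {y,x1}" x0] off_x0[OF x1(1)] x0(2) x1(2) by blast
  next
    case False
    then obtain p q where pq: "p \<in> X" "q \<in> X" "p \<noteq> q" "col {y,p} = col {y,q}"
      using coloring_pigeonhole[OF co XF_subset[OF co X] y XF_card_gt[OF co X]] by blast
    have "col {y,x} = col {y,p}" if "x \<in> X" for x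
      using K31_free(2)[OF pq(1,2) that] False pq that
      by (cases "x = p \<or> x = q") auto
    then show ?thesis
      using that[of "col {y,p}" p] False pq(1) by blast
  qed
qed

lemma XF_outside_vertices:
  assumes "standard c V col" "X \<in> XF c V col" "mono_col col X a" "Y \<subseteq> V" "Y \<inter> X = {}"
  obtains B Z where "\<forall>y\<in>Y. B y \<noteq> a \<and> (\<forall>x\<in>X. x \<noteq> Z y \<longrightarrow> col {y,x} = B y)
      \<and> (\<forall>x\<in>X. col {y,x} = a \<or> col {y,x} = B y)"
proof -
  have "\<forall>y\<in>Y. \<exists>b z. b \<noteq> a \<and> (\<forall>x\<in>X. x \<noteq> z \<longrightarrow> col {y,x} = b)
      \<and> (\<forall>x\<in>X. col {y,x} = a \<or> col {y,x} = b)"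
  proof
    fix y assume "y \<in> Y"
    with assms(4,5) obtain b z where "b \<noteq> a" "\<forall>x\<in>X. x \<noteq> z \<longrightarrow> col {y,x} = b"
      "\<forall>x\<in>X. col {y,x} = a \<or> col {y,x} = b"
      using XF_outside_vertex[OF assms(1-3), of y] by blast
    then show "\<exists>b z. b \<noteq> a \<and> (\<forall>x\<in>X. x \<noteq> z \<longrightarrow> col {y,x} = b)
      \<and> (\<forall>x\<in>X. col {y,x} = a \<or> col {y,x} = b)" by blast
  qed
  then show ?thesis
    using that by metis
qed

lemma XF_outside_vertex_one_edge:
  assumes "standard c V col" "X \<in> XF c V col" "mono_col col X a" "y \<in> V" "y \<notin> X"
    and "v \<in> X" "col {y,v} = a"
  obtains b where "b \<noteq> a" "\<forall>x\<in>X - {v}. col {y,x} = b"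
proof -
  obtain b z where b: "b \<noteq> a" "\<forall>x\<in>X. x \<noteq> z \<longrightarrow> col {y,x} = b"
    using XF_outside_vertex[OF assms(1-5)] by metis
  have "z = v"
    using b assms(6,7) by force
  then show ?thesis
    using that[OF b(1)] b(2) by blast
qed

lemma XF_inter_card_le_1:
  assumes st: "standard c V col" and X1: "X1 \<in> XF c V col" and X2: "X2 \<in> XF c V col"
    and ne: "X1 \<noteq> X2" and m1: "mono_col col X1 c1" and m2: "mono_col col X2 c2"
  shows "card (X1 \<inter> X2) \<le> 1"
proof -
  have co: "coloring c V col"
    using st unfolding standard_def by simp
  have "u = v" if u: "u \<in> X1 \<inter> X2" and v: "v \<in> X1 \<inter> X2" for u v
  proof (rule ccontr)
    assume "u \<noteq> v"
    then have "c1 = c2"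
      using m1 m2 u v unfolding mono_col_def by blast
    obtain y where y: "y \<in> X2" "y \<notin> X1"
      using XF_not_subset[OF co X2 X1 ne[symmetric] m1] by blast
    have "col {y,u} = c1" "col {y,v} = c1"
      using m2 \<open>c1 = c2\<close> y u v unfolding mono_col_def by auto
    then show False
      using XF_outside_unique_edge[OF st X1 m1 _ y(2)] XF_subset[OF co X2] y(1) u v \<open>u \<noteq> v\<close>
      by blast
  qed
  moreover have "finite (X1 \<inter> X2)"
    using XF_finite[OF co X1] by simp
  ultimately show ?thesis
    using card_le_Suc0_iff_eq[of "X1 \<inter> X2"] by (simp add: Ball_def)
qed

lemma XF_single_inter_same_colour:
  assumes st: "standard c V col" and X1: "X1 \<in> XF c V col" and X2: "X2 \<in> XF c V col"
    and m1: "mono_col col X1 c1" and m2: "mono_col col X2 c2" and I: "X1 \<inter> X2 = {v}"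
  shows "c1 = c2"
proof (rule ccontr)
  assume nc: "c1 \<noteq> c2"
  have co: "coloring c V col"
    using st unfolding standard_def by simp
  have v: "v \<in> X1" "v \<in> X2"
    using I by auto
  have c1_to_X2: "\<exists>z. \<forall>y\<in>X2. y \<noteq> z \<longrightarrow> col {x,y} = c1" if x: "x \<in> X1" "x \<noteq> v" for x
  proof -
    have "x \<in> V" "x \<notin> X2"
      using x I XF_subset[OF co X1] by auto
    then obtain b z where b: "\<forall>y\<in>X2. y \<noteq> z \<longrightarrow> col {x,y} = b"
        "\<forall>y\<in>X2. col {x,y} = c2 \<or> col {x,y} = b"
      using XF_outside_vertex[OF st X2 m2] by metis
    have "col {x,v} = c1"
      using m1 x v unfolding mono_col_def by blast
    then have "b = c1"
      using b(2) v(2) nc by force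
    with b(1) show ?thesis by blast
  qed
  obtain x1 where x1: "x1 \<in> X1" "x1 \<noteq> v"
    using obtain_not_in_list[of "[v]" X1] XF_card_ge_6[OF co X1] by auto
  obtain x2 where x2: "x2 \<in> X1" "x2 \<noteq> v" "x2 \<noteq> x1"
    using obtain_not_in_list[of "[v, x1]" X1] XF_card_ge_6[OF co X1] by auto
  obtain z1 z2 where "\<forall>y\<in>X2. y \<noteq> z1 \<longrightarrow> col {x1,y} = c1" "\<forall>y\<in>X2. y \<noteq> z2 \<longrightarrow> col {x2,y} = c1"
    using c1_to_X2 x1 x2 by meson
  moreover obtain y where y: "y \<in> X2" "y \<noteq> v" "y \<noteq> z1" "y \<noteq> z2"
    using obtain_not_in_list[of "[v, z1, z2]" X2] XF_card_ge_6[OF co X2] by auto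
  ultimately have "col {x1,y} = c1" "col {x2,y} = c1"
    by simp_all
  then have "col {y,x1} = c1" "col {y,x2} = c1"
    by (simp_all only: insert_commute)
  moreover have "y \<in> V" "y \<notin> X1"
    using y I XF_subset[OF co X2] by auto
  ultimately show False
    using XF_outside_unique_edge[OF st X1 m1] x1 x2 by blast
qed

lemma XF_single_inter_cross_colour:
  assumes st: "standard c V col" and X1: "X1 \<in> XF c V col" and X2: "X2 \<in> XF c V col"
    and m1: "mono_col col X1 a" and m2: "mono_col col X2 a" and I: "X1 \<inter> X2 = {v}"
  obtains d where "d \<noteq> a" "\<forall>e\<in>star (X1 - {v}) (X2 - {v}). col e = d"
proof -
  have co: "coloring c V col"
    using st unfolding standard_def by simp
  have v: "v \<in> X1" "v \<in> X2"
    using I by auto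
  have uniform: "\<exists>b. b \<noteq> a \<and> (\<forall>x\<in>X - {v}. col {y,x} = b)"
    if "X \<in> XF c V col" "mono_col col X a" "v \<in> X" "y \<in> Y - {v}" "Y \<subseteq> V" "mono_col col Y a" "v \<in> Y"
      "X \<inter> Y = {v}" for X Y y
  proof -
    have "col {y,v} = a"
      using that(4,6,7) unfolding mono_col_def by blast
    moreover have "y \<in> V" "y \<notin> X"
      using that(4,5,8) by auto
    ultimately show ?thesis
      using XF_outside_vertex_one_edge[OF st that(1,2) _ _ that(3)] by metis
  qed
  obtain x0 where x0: "x0 \<in> X1 - {v}"
    using obtain_not_in_list[of "[v]" X1] XF_card_ge_6[OF co X1] by auto
  obtain d where d: "d \<noteq> a" "\<forall>y\<in>X2 - {v}. col {x0,y} = d"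
    using uniform[OF X2 m2 v(2) x0 XF_subset[OF co X1] m1 v(1)] I by (auto simp: Int_commute)
  have "col {x,y} = d" if x: "x \<in> X1 - {v}" and y: "y \<in> X2 - {v}" for x y
  proof -
    obtain b where "\<forall>x\<in>X1 - {v}. col {y,x} = b"
      using uniform[OF X1 m1 v(1) y XF_subset[OF co X2] m2 v(2) I] by blast
    then have "col {x,y} = col {x0,y}"
      using x x0 by (simp add: insert_commute)
    with d(2) y show ?thesis by simp
  qed
  then show ?thesis
    using that[OF d(1)] unfolding star_def by blast
qed

lemma XF_disjoint_same_colour:
  assumes st: "standard c V col" and X1: "X1 \<in> XF c V col" and X2: "X2 \<in> XF c V col"
    and m1: "mono_col col X1 c1" and m2: "mono_col col X2 c2" and I: "X1 \<inter> X2 = {}"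
  shows "c1 = c2"
proof (rule ccontr)
  assume nc: "c1 \<noteq> c2"
  have co: "coloring c V col" and no_K33: "\<not> has_K33 V col"
    using st unfolding standard_def by auto
  obtain B Z where BZ: "\<forall>x\<in>X1. B x \<noteq> c2 \<and> (\<forall>y\<in>X2. y \<noteq> Z x \<longrightarrow> col {x,y} = B x)
      \<and> (\<forall>y\<in>X2. col {x,y} = c2 \<or> col {x,y} = B x)"
    by (rule XF_outside_vertices[OF st X2 m2 XF_subset[OF co X1] I])
  define S where "S = {x\<in>X1. B x = c1}"
  have "finite S"
    using XF_finite[OF co X1] unfolding S_def by simp
  have "x = x'" if x: "x \<in> S" and x': "x' \<in> S" for x x'
  proof -
    obtain y where y: "y \<in> X2" "y \<noteq> Z x" "y \<noteq> Z x'"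
      using obtain_not_in_list[of "[Z x, Z x']" X2] XF_card_ge_6[OF co X2] by auto
    then have "col {x,y} = c1" "col {x',y} = c1"
      using BZ x x' unfolding S_def by auto
    then have "col {y,x} = c1" "col {y,x'} = c1"
      by (simp_all only: insert_commute)
    moreover have "y \<in> V" "y \<notin> X1"
      using y I XF_subset[OF co X2] by auto
    ultimately show ?thesis
      using XF_outside_unique_edge[OF st X1 m1] x x' unfolding S_def by blast
  qed
  then have "card S + 3 \<le> card X1"
    using card_le_Suc0_iff_eq[OF \<open>finite S\<close>] XF_card_ge_6[OF co X1] by fastforce
  then obtain x1 x2 x3 where x: "x1 \<in> X1 - S" "x2 \<in> X1 - S" "x3 \<in> X1 - S" "distinct [x1, x2, x3]"
    using obtain_three_outside[OF \<open>finite S\<close>] by blast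
  have "card (set [Z x1, Z x2, Z x3]) + 3 \<le> card X2"
    using card_length[of "[Z x1, Z x2, Z x3]"] XF_card_ge_6[OF co X2] by simp
  then obtain y1 y2 y3 where y: "y1 \<in> X2 - set [Z x1, Z x2, Z x3]" "y2 \<in> X2 - set [Z x1, Z x2, Z x3]"
      "y3 \<in> X2 - set [Z x1, Z x2, Z x3]" "distinct [y1, y2, y3]"
    using obtain_three_outside[of "set [Z x1, Z x2, Z x3]" X2] by blast
  have "y1 \<in> V" "y1 \<notin> X1"
    using y(1) I XF_subset[OF co X2] by auto
  then obtain b where b: "b \<noteq> c1" "\<forall>x\<in>X1. col {y1,x} = c1 \<or> col {y1,x} = b"
    using XF_outside_vertex[OF st X1 m1] by metis
  have B_eq: "B x = b" if "x \<in> {x1, x2, x3}" for x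
  proof -
    have "col {x,y1} = B x" "B x \<noteq> c1"
      using that x y(1) BZ unfolding S_def by auto
    then show ?thesis
      using b(2) that x by (auto simp: insert_commute)
  qed
  then have cross: "\<forall>x\<in>{x1, x2, x3}. \<forall>y\<in>{y1, y2, y3}. col {x,y} = b"
    using BZ x y by auto
  have "b \<noteq> c2"
    using BZ x(1) B_eq[of x1] by auto
  have "has_K33 V col"
  proof (rule has_K33I[OF _ _ _ mono_col_subset[OF m1] mono_col_subset[OF m2] cross])
    show "{x1, x2, x3, y1, y2, y3} \<subseteq> V"
      using x y XF_subset[OF co X1] XF_subset[OF co X2] by auto
    show "distinct [x1, x2, x3, y1, y2, y3]"
      using x y I by auto
  qed (use x y nc b(1) \<open>b \<noteq> c2\<close> in auto)
  with no_K33 show False ..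
qed

lemma XF_disjoint_cross_colour:
  assumes st: "standard c V col" and X1: "X1 \<in> XF c V col" and X2: "X2 \<in> XF c V col"
    and m1: "mono_col col X1 a" and m2: "mono_col col X2 a" and I: "X1 \<inter> X2 = {}"
  obtains M d where "M \<subseteq> star X1 X2" "matching M" "d \<noteq> a"
    "\<forall>e\<in>M. col e = a" "\<forall>e\<in>star X1 X2 - M. col e = d"
proof -
  have co: "coloring c V col"
    using st unfolding standard_def by simp
  have X1_out: "x \<in> V" "x \<notin> X2" if "x \<in> X1" for x
    using that I XF_subset[OF co X1] by auto
  have X2_out: "y \<in> V" "y \<notin> X1" if "y \<in> X2" for y
    using that I XF_subset[OF co X2] by auto
  obtain B Z where BZ: "\<forall>x\<in>X1. B x \<noteq> a \<and> (\<forall>y\<in>X2. y \<noteq> Z x \<longrightarrow> col {x,y} = B x)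
      \<and> (\<forall>y\<in>X2. col {x,y} = a \<or> col {x,y} = B x)"
    by (rule XF_outside_vertices[OF st X2 m2 XF_subset[OF co X1] I])
  obtain x0 where x0: "x0 \<in> X1"
    using XF_card_ge_6[OF co X1] by force
  have B_const: "B x = B x0" if x: "x \<in> X1" for x
  proof -
    obtain y where y: "y \<in> X2" "y \<noteq> Z x" "y \<noteq> Z x0"
      using obtain_not_in_list[of "[Z x, Z x0]" X2] XF_card_ge_6[OF co X2] by auto
    obtain b where "\<forall>x\<in>X1. col {y,x} = a \<or> col {y,x} = b"
      using XF_outside_vertex[OF st X1 m1 X2_out[OF y(1)]] by metis
    moreover have "col {y,x} = B x" "col {y,x0} = B x0" "B x \<noteq> a" "B x0 \<noteq> a"
      using BZ x x0 y by (auto simp: insert_commute)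
    ultimately show ?thesis
      using x x0 by metis
  qed
  define M where "M = {e\<in>star X1 X2. col e = a}"
  have "matching M"
    unfolding matching_def
  proof (intro ballI impI)
    fix e g assume "e \<in> M" "g \<in> M" "e \<noteq> g"
    then obtain x y x' y' where e: "x \<in> X1" "y \<in> X2" "e = {x,y}" "col {x,y} = a"
        and g: "x' \<in> X1" "y' \<in> X2" "g = {x',y'}" "col {x',y'} = a"
      unfolding M_def star_def by auto
    have "x \<noteq> x'"
      using XF_outside_unique_edge[OF st X2 m2 X1_out[OF e(1)]] e g \<open>e \<noteq> g\<close> by blast
    moreover have "y \<noteq> y'"
      using XF_outside_unique_edge[OF st X1 m1 X2_out[OF e(2)]] e g \<open>e \<noteq> g\<close>
      by (metis insert_commute)
    ultimately show "e \<inter> g = {}"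
      using e g I by auto
  qed
  moreover have "\<forall>e\<in>star X1 X2 - M. col e = B x0"
    using BZ B_const unfolding M_def star_def by fastforce
  moreover have "M \<subseteq> star X1 X2" "\<forall>e\<in>M. col e = a" "B x0 \<noteq> a"
    using BZ x0 unfolding M_def by auto
  ultimately show ?thesis
    using that by blast
qed

theorem claim5p4:
  fixes c :: nat and V :: "'a set" and col :: "'a set \<Rightarrow> nat"
    and X1 X2 :: "'a set" and c1 c2 :: nat
  assumes "c \<ge> 2"
    and "standard c V col"
    and "X1 \<in> XF c V col" and "X2 \<in> XF c V col" and "X1 \<noteq> X2"
    and "mono_col col X1 c1" and "mono_col col X2 c2"
  shows "(X1 \<inter> X2 = {} \<longrightarrow> c1 = c2 \<and>
            (\<exists>M c3. M \<subseteq> star X1 X2 \<and> matching M \<and> c3 \<noteq> c1 \<and>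
               (\<forall>e\<in>M. col e = c1) \<and> (\<forall>e\<in>star X1 X2 - M. col e = c3)))
       \<and> (\<forall>v. X1 \<inter> X2 = {v} \<longrightarrow> c1 = c2 \<and>
            (\<exists>c3. c3 \<noteq> c1 \<and> (\<forall>e\<in>star (X1 - {v}) (X2 - {v}). col e = c3)))
       \<and> \<not> card (X1 \<inter> X2) \<ge> 2"
proof (intro conjI allI impI)
  assume I: "X1 \<inter> X2 = {}"
  show c12: "c1 = c2"
    using XF_disjoint_same_colour[OF assms(2-4,6,7) I] .
  show "\<exists>M c3. M \<subseteq> star X1 X2 \<and> matching M \<and> c3 \<noteq> c1 \<and>
      (\<forall>e\<in>M. col e = c1) \<and> (\<forall>e\<in>star X1 X2 - M. col e = c3)"
    using XF_disjoint_cross_colour[OF assms(2-4,6) assms(7)[folded c12] I] by metis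
next
  fix v assume I: "X1 \<inter> X2 = {v}"
  show c12: "c1 = c2"
    using XF_single_inter_same_colour[OF assms(2-4,6,7) I] .
  show "\<exists>c3. c3 \<noteq> c1 \<and> (\<forall>e\<in>star (X1 - {v}) (X2 - {v}). col e = c3)"
    using XF_single_inter_cross_colour[OF assms(2-4,6) assms(7)[folded c12] I] by metis
next
  show "\<not> card (X1 \<inter> X2) \<ge> 2"
    using XF_inter_card_le_1[OF assms(2-7)] by simp
qed

end
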